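(* Let $n\ge3$, let $p:[\mathcal Q:\xi]\to[\mathcal H:\partial]$ be a trivial fibration and $f:[\mathcal Q:\xi]\to[\mathcal G:\delta]$ a morphism of reduced $n$-crossed complexes, $\nabla^f=(p,f)$, and $P=\mathcal Q_{n-1}\times^{\mathcal Q_n}(\mathcal H_n\times\mathcal G_n)$ the degree $n-1$ group of $\mathcal Q^{\nabla^f_n}$. Define $i:\mathcal G_n\to P$ by $i(c)=[1,(1,c)]$ and $u:P\to\ker\xi_{n-2}\times_{\ker\partial_{n-2}}\mathcal H_{n-1}$ by $u([a,(b,c)])=(\xi_{n-1}(a),\,p_{n-1}(a)\partial_n(b))$. Then the sequence $$1\to\mathcal G_n\xrightarrow{i}P\xrightarrow{u}\ker\xi_{n-2}\times_{\ker\partial_{n-2}}\mathcal H_{n-1}\to1$$ is exact, and for every $k\le n-2$ the map $u_k:\mathcal Q_k\to\ker\xi_{k-1}\times_{\ker\partial_{k-1}}\mathcal H_k$, $x\mapsto(\xi_k(x),p_k(x))$, is surjective.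
   Context: A reduced $n$-crossed complex $[C:\partial]$ is a sequence of groups and homomorphisms $C_n\xrightarrow{\partial_n}C_{n-1}\to\cdots\to C_2\xrightarrow{\partial_2}C_1$ with an action of $C_1$ on each $C_k$ ($k\ge2$), such that $\partial_2$ is a crossed module, $C_k$ is abelian for $k\ge3$, each $\partial_k$ is $C_1$-equivariant, $\partial_{k-1}\partial_k$ is trivial, and $\partial_2(C_2)$ acts trivially on $C_k$ for $k\ge3$; morphisms are families of homomorphisms commuting with differentials and actions; products are degreewise. Homotopy groups: $\pi_1(C)=C_1/\partial_2(C_2)$, $\pi_k(C)=\ker\partial_k/\operatorname{im}\partial_{k+1}$ ($2\le k\le n-1$), $\pi_n(C)=\ker\partial_n$. Weak equivalence: isomorphism on all $\pi_k$; fibration: surjective in each degree; trivial fibration: both. For $p:[\mathcal Q:\xi]\to[\mathcal H:\partial]$, $\ker\xi_{k-1}\times_{\ker\partial_{k-1}}\mathcal H_k$ denotes the fibre product of $p_{k-1}:\ker\xi_{k-1}\to\ker\partial_{k-1}$ and $\partial_k:\mathcal H_k\to\ker\partial_{k-1}$, with conventions $\ker\xi_0=\ker\partial_0=1$, $\ker\xi_1=\mathcal Q_1$, $\ker\partial_1=\mathcal H_1$. The $n$-pushout $\mathcal Q^{\nabla_n}$ of $\nabla=(p,f):\mathcal Q\to\mathcal K=\mathcal H\times\mathcal G$: equal to $\mathcal Q$ in degrees $\le n-2$, degree $n$ group $\mathcal K_n$, degree $n-1$ group $P$, the quotient of the (semi)direct product $\mathcal Q_{n-1}\ltimes\mathcal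 K_n$ (for $n=3$, $\mathcal Q_2$ acts on $\mathcal K_3$ via $\nabla_1\circ\xi_2$; for $n\ge4$ direct) by the normal subgroup of elements $(\xi_n(x)^{-1},\nabla_n(x))$, $x\in\mathcal Q_n$, with elements written $[a,(b,c)]$; differentials $(b,c)\mapsto[1,(b,c)]$ and $[a,(b,c)]\mapsto\xi_{n-1}(a)$. *)

theory Defs
  imports "HOL-Algebra.Coset"
begin

text \<open>A reduced n-crossed complex is given by groups C k (1 <= k <= n),
  differentials d k : C k -> C (k-1) (2 <= k <= n), and actions act k g x of
  g in C 1 on x in C k (2 <= k <= n).\<close>

definition reduced_ncc ::
  "nat \<Rightarrow> (nat \<Rightarrow> 'a monoid) \<Rightarrow> (nat \<Rightarrow> 'a \<Rightarrow> 'a) \<Rightarrow> (nat \<Rightarrow> 'a \<Rightarrow> 'a \<Rightarrow> 'a) \<Rightarrow> bool" where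
  "reduced_ncc n C d act \<longleftrightarrow>
     (\<forall>k\<in>{1..n}. group (C k))
   \<and> (\<forall>k\<in>{3..n}. comm_group (C k))
   \<and> (\<forall>k\<in>{2..n}. d k \<in> hom (C k) (C (k-1)))
   \<and> (\<forall>k\<in>{2..n}. \<forall>g\<in>carrier (C 1). \<forall>x\<in>carrier (C k). act k g x \<in> carrier (C k))
   \<and> (\<forall>k\<in>{2..n}. \<forall>x\<in>carrier (C k). act k \<one>\<^bsub>C 1\<^esub> x = x)
   \<and> (\<forall>k\<in>{2..n}. \<forall>g\<in>carrier (C 1). \<forall>h\<in>carrier (C 1). \<forall>x\<in>carrier (C k).
        act k (g \<otimes>\<^bsub>C 1\<^esub> h) x = act k g (act k h x))
   \<and> (\<forall>k\<in>{2..n}. \<forall>g\<in>carrier (C 1). \<forall>x\<in>carrier (C k). \<forall>y\<in>carrier (C k).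
        act k g (x \<otimes>\<^bsub>C k\<^esub> y) = act k g x \<otimes>\<^bsub>C k\<^esub> act k g y)
   \<and> (\<forall>g\<in>carrier (C 1). \<forall>x\<in>carrier (C 2).
        d 2 (act 2 g x) = g \<otimes>\<^bsub>C 1\<^esub> d 2 x \<otimes>\<^bsub>C 1\<^esub> inv\<^bsub>C 1\<^esub> g)
   \<and> (\<forall>x\<in>carrier (C 2). \<forall>y\<in>carrier (C 2).
        act 2 (d 2 x) y = x \<otimes>\<^bsub>C 2\<^esub> y \<otimes>\<^bsub>C 2\<^esub> inv\<^bsub>C 2\<^esub> x)
   \<and> (\<forall>k\<in>{3..n}. \<forall>g\<in>carrier (C 1). \<forall>x\<in>carrier (C k). d k (act k g x) = act (k-1) g (d k x))
   \<and> (\<forall>k\<in>{3..n}. \<forall>x\<in>carrier (C k). d (k-1) (d k x) = \<one>\<^bsub>C (k-2)\<^esub>)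
   \<and> (\<forall>k\<in>{3..n}. \<forall>y\<in>carrier (C 2). \<forall>x\<in>carrier (C k). act k (d 2 y) x = x)"

definition ncc_morphism ::
  "nat \<Rightarrow> (nat \<Rightarrow> 'a monoid) \<Rightarrow> (nat \<Rightarrow> 'a \<Rightarrow> 'a) \<Rightarrow> (nat \<Rightarrow> 'a \<Rightarrow> 'a \<Rightarrow> 'a)
       \<Rightarrow> (nat \<Rightarrow> 'b monoid) \<Rightarrow> (nat \<Rightarrow> 'b \<Rightarrow> 'b) \<Rightarrow> (nat \<Rightarrow> 'b \<Rightarrow> 'b \<Rightarrow> 'b)
       \<Rightarrow> (nat \<Rightarrow> 'a \<Rightarrow> 'b) \<Rightarrow> bool" where
  "ncc_morphism n C d act D e act' F \<longleftrightarrow>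
     reduced_ncc n C d act \<and> reduced_ncc n D e act'
   \<and> (\<forall>k\<in>{1..n}. F k \<in> hom (C k) (D k))
   \<and> (\<forall>k\<in>{2..n}. \<forall>x\<in>carrier (C k). F (k-1) (d k x) = e k (F k x))
   \<and> (\<forall>k\<in>{2..n}. \<forall>g\<in>carrier (C 1). \<forall>x\<in>carrier (C k).
        F k (act k g x) = act' k (F 1 g) (F k x))"

text \<open>ker of the differential out of degree j; conventions: ker d_1 = C 1,
  and ker d_0 = trivial group, represented as the one-point set {1 of C 1}.\<close>
definition kerC :: "(nat \<Rightarrow> 'a monoid) \<Rightarrow> (nat \<Rightarrow> 'a \<Rightarrow> 'a) \<Rightarrow> nat \<Rightarrow> 'a set" where
  "kerC C d j = (if j = 0 then {\<one>\<^bsub>C 1\<^esub>} else if j = 1 then carrier (C 1)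
                 else {x \<in> carrier (C j). d j x = \<one>\<^bsub>C (j-1)\<^esub>})"

definition imC :: "nat \<Rightarrow> (nat \<Rightarrow> 'a monoid) \<Rightarrow> (nat \<Rightarrow> 'a \<Rightarrow> 'a) \<Rightarrow> nat \<Rightarrow> 'a set" where
  "imC n C d k = (if k = n then {\<one>\<^bsub>C n\<^esub>} else d (Suc k) ` carrier (C (Suc k)))"

definition pi_grp :: "nat \<Rightarrow> (nat \<Rightarrow> 'a monoid) \<Rightarrow> (nat \<Rightarrow> 'a \<Rightarrow> 'a) \<Rightarrow> nat \<Rightarrow> 'a set monoid" where
  "pi_grp n C d k = ((C k)\<lparr>carrier := kerC C d k\<rparr>) Mod (imC n C d k)"

definition pi_map :: "nat \<Rightarrow> (nat \<Rightarrow> 'b monoid) \<Rightarrow> (nat \<Rightarrow> 'b \<Rightarrow> 'b) \<Rightarrow> (nat \<Rightarrow> 'a \<Rightarrow> 'b)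
                       \<Rightarrow> nat \<Rightarrow> 'a set \<Rightarrow> 'b set" where
  "pi_map n D e F k S = imC n D e k #>\<^bsub>D k\<^esub> F k (SOME x. x \<in> S)"

definition ncc_weak_equivalence where
  "ncc_weak_equivalence n C d act D e act' F \<longleftrightarrow>
     ncc_morphism n C d act D e act' F
   \<and> (\<forall>k\<in>{1..n}. pi_map n D e F k \<in> iso (pi_grp n C d k) (pi_grp n D e k))"

definition ncc_fibration where
  "ncc_fibration n C d act D e act' F \<longleftrightarrow>
     ncc_morphism n C d act D e act' F
   \<and> (\<forall>k\<in>{1..n}. F k ` carrier (C k) = carrier (D k))"

definition ncc_trivial_fibration where
  "ncc_trivial_fibration n C d act D e act' F \<longleftrightarrow>
     ncc_fibration n C d act D e act' F \<and> ncc_weak_equivalence n C d act D e act' F"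

definition fibC :: "(nat \<Rightarrow> 'q monoid) \<Rightarrow> (nat \<Rightarrow> 'q \<Rightarrow> 'q) \<Rightarrow> (nat \<Rightarrow> 'h monoid) \<Rightarrow> (nat \<Rightarrow> 'h \<Rightarrow> 'h)
                    \<Rightarrow> (nat \<Rightarrow> 'q \<Rightarrow> 'h) \<Rightarrow> nat \<Rightarrow> ('q \<times> 'h) set" where
  "fibC Q xi H dH p k = {(x, y). x \<in> kerC Q xi (k-1) \<and> y \<in> carrier (H k)
                                 \<and> (k \<ge> 2 \<longrightarrow> p (k-1) x = dH k y)}"

text \<open>The fibre product as a group (used for k >= 2), a subgroup of Q_(k-1) x H_k.\<close>
definition fibGrp where
  "fibGrp Q xi H dH p k = (Q (k-1) \<times>\<times> H k)\<lparr>carrier := fibC Q xi H dH p k\<rparr>"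

text \<open>u_k x = (xi_k x, p_k x); for k = 1, xi_1 is the map to the trivial group.\<close>
definition u_map :: "(nat \<Rightarrow> 'q monoid) \<Rightarrow> (nat \<Rightarrow> 'q \<Rightarrow> 'q) \<Rightarrow> (nat \<Rightarrow> 'q \<Rightarrow> 'h) \<Rightarrow> nat \<Rightarrow> 'q \<Rightarrow> 'q \<times> 'h" where
  "u_map Q xi p k x = (if k = 1 then \<one>\<^bsub>Q 1\<^esub> else xi k x, p k x)"

text \<open>The (semi)direct product Q_(n-1) |x (H_n x G_n); for n = 3, Q_2 acts on K_3 via
  nabla_1 o xi_2, for n >= 4 the product is direct.  Multiplication
  (a,k)(a',k') = (a a', k (a . k')).\<close>
definition sdp_act where
  "sdp_act n xi actH actG p f a = (\<lambda>(b, c). if n = 3 then (actH 3 (p 1 (xi 2 a)) b, actG 3 (f 1 (xi 2 a)) c)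
                                            else (b, c))"

definition sdp :: "nat \<Rightarrow> (nat \<Rightarrow> 'q monoid) \<Rightarrow> (nat \<Rightarrow> 'q \<Rightarrow> 'q)
     \<Rightarrow> (nat \<Rightarrow> 'h monoid) \<Rightarrow> (nat \<Rightarrow> 'h \<Rightarrow> 'h \<Rightarrow> 'h) \<Rightarrow> (nat \<Rightarrow> 'g monoid) \<Rightarrow> (nat \<Rightarrow> 'g \<Rightarrow> 'g \<Rightarrow> 'g)
     \<Rightarrow> (nat \<Rightarrow> 'q \<Rightarrow> 'h) \<Rightarrow> (nat \<Rightarrow> 'q \<Rightarrow> 'g) \<Rightarrow> ('q \<times> ('h \<times> 'g)) monoid" where
  "sdp n Q xi H actH G actG p f =
     \<lparr> carrier = carrier (Q (n-1)) \<times> (carrier (H n) \<times> carrier (G n)),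
       mult = (\<lambda>x y. (let w = sdp_act n xi actH actG p f (fst x) (snd y) in
                 (fst x \<otimes>\<^bsub>Q (n-1)\<^esub> fst y, fst (snd x) \<otimes>\<^bsub>H n\<^esub> fst w,
                  snd (snd x) \<otimes>\<^bsub>G n\<^esub> snd w))),
       one = (\<one>\<^bsub>Q (n-1)\<^esub>, \<one>\<^bsub>H n\<^esub>, \<one>\<^bsub>G n\<^esub>) \<rparr>"

definition sdpN where
  "sdpN n Q xi p f = (\<lambda>x. (inv\<^bsub>Q (n-1)\<^esub> (xi n x), p n x, f n x)) ` carrier (Q n)"

definition pushP where
  "pushP n Q xi H actH G actG p f = sdp n Q xi H actH G actG p f Mod sdpN n Q xi p f"

definition pclass where
  "pclass n Q xi H actH G actG p f a b c =
     sdpN n Q xi p f #>\<^bsub>sdp n Q xi H actH G actG p f\<^esub> (a, b, c)"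

end

theory Submission
  imports Defs
begin

text \<open>
  The degree n-1 group P is the quotient of the semidirect product
  Q_(n-1) \<ltimes> (H_n \<times> G_n) by the image of \<nu> x = (\<xi>_n(x)\<inverse>, p_n x, f_n x).
  The map (a, (b, c)) \<mapsto> (\<xi>_(n-1) a, p_(n-1)(a) \<partial>_n(b)) is a homomorphism, because
  \<partial>_n(H_n) is central in H_(n-1) and the twisting action does not change \<partial>_n b; it kills
  the image of \<nu>, so it induces u on P.

  Everything else rests on one lifting property of a trivial fibration p: for 2 \<le> k \<le> n
  every element (x, y) of ker \<xi>_(k-1) \<times>_(ker \<partial>_(k-1)) H_k is (\<xi>_k a, p_k a) for some a.
  Injectivity of \<pi>_(k-1)(p) lifts x; the error in the second coordinate is a cycle,
  which lifts by surjectivity of \<pi>_k(p) and of p_(k+1). Lifting in degree n-1 gives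
  surjectivity of u (and of u_k for smaller k); lifting in degree n shows that every
  class killed by u has a representative (1, (1, c)), and injectivity of \<pi>_n(p)
  shows that c is unique.
\<close>

section \<open>Group-theoretic preliminaries\<close>

definition semidirect :: "'a monoid \<Rightarrow> 'b monoid \<Rightarrow> ('a \<Rightarrow> 'b \<Rightarrow> 'b) \<Rightarrow> ('a \<times> 'b) monoid" where
  "semidirect A B s = \<lparr>carrier = carrier A \<times> carrier B,
     mult = (\<lambda>(a, b) (a', b'). (a \<otimes>\<^bsub>A\<^esub> a', b \<otimes>\<^bsub>B\<^esub> s a b')),
     one = (\<one>\<^bsub>A\<^esub>, \<one>\<^bsub>B\<^esub>)\<rparr>"

lemma carrier_semidirect [simp]: "carrier (semidirect A B s) = carrier A \<times> carrier B"
  by (simp add: semidirect_def)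

lemma one_semidirect [simp]: "\<one>\<^bsub>semidirect A B s\<^esub> = (\<one>\<^bsub>A\<^esub>, \<one>\<^bsub>B\<^esub>)"
  by (simp add: semidirect_def)

lemma mult_semidirect [simp]:
  "(a, b) \<otimes>\<^bsub>semidirect A B s\<^esub> (a', b') = (a \<otimes>\<^bsub>A\<^esub> a', b \<otimes>\<^bsub>B\<^esub> s a b')"
  by (simp add: semidirect_def)

locale aut_action = A: group A + B: group B
  for A :: "'a monoid" and B :: "'b monoid" and s :: "'a \<Rightarrow> 'b \<Rightarrow> 'b" +
  assumes act_closed [intro, simp]: "\<lbrakk>a \<in> carrier A; b \<in> carrier B\<rbrakk> \<Longrightarrow> s a b \<in> carrier B"
    and act_one [simp]: "b \<in> carrier B \<Longrightarrow> s \<one>\<^bsub>A\<^esub> b = b"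
    and act_mult: "\<lbrakk>a \<in> carrier A; a' \<in> carrier A; b \<in> carrier B\<rbrakk> \<Longrightarrow> s (a \<otimes>\<^bsub>A\<^esub> a') b = s a (s a' b)"
    and act_hom: "\<lbrakk>a \<in> carrier A; b \<in> carrier B; b' \<in> carrier B\<rbrakk>
                  \<Longrightarrow> s a (b \<otimes>\<^bsub>B\<^esub> b') = s a b \<otimes>\<^bsub>B\<^esub> s a b'"
begin

lemma act_unit [simp]: "a \<in> carrier A \<Longrightarrow> s a \<one>\<^bsub>B\<^esub> = \<one>\<^bsub>B\<^esub>"
  by (metis B.l_cancel_one' B.one_closed B.r_one act_closed act_hom)

lemma semidirect_group: "group (semidirect A B s)"
proof (rule groupI)
  fix x assume "x \<in> carrier (semidirect A B s)"
  then obtain a b where x: "x = (a, b)" "a \<in> carrier A" "b \<in> carrier B" by auto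
  show "\<exists>y\<in>carrier (semidirect A B s). y \<otimes>\<^bsub>semidirect A B s\<^esub> x = \<one>\<^bsub>semidirect A B s\<^esub>"
    using x by (intro bexI[of _ "(inv\<^bsub>A\<^esub> a, s (inv\<^bsub>A\<^esub> a) (inv\<^bsub>B\<^esub> b))"])
      (simp_all add: act_hom[symmetric])
qed (auto simp: act_mult act_hom A.m_assoc B.m_assoc)

sublocale S: group "semidirect A B s"
  by (rule semidirect_group)

lemma inv_semidirect:
  assumes "a \<in> carrier A" "b \<in> carrier B"
  shows "inv\<^bsub>semidirect A B s\<^esub> (a, b) = (inv\<^bsub>A\<^esub> a, s (inv\<^bsub>A\<^esub> a) (inv\<^bsub>B\<^esub> b))"
  using assms by (intro S.inv_equality) (simp_all add: act_hom[symmetric])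

lemma conj_semidirect:
  assumes B: "comm_group B"
    and a: "a \<in> carrier A" and b: "b \<in> carrier B" and m: "m \<in> carrier A" and u: "u \<in> carrier B"
    and trivial: "\<And>z. z \<in> carrier B \<Longrightarrow> s (a \<otimes>\<^bsub>A\<^esub> m \<otimes>\<^bsub>A\<^esub> inv\<^bsub>A\<^esub> a) z = z"
  shows "(a, b) \<otimes>\<^bsub>semidirect A B s\<^esub> (m, u) \<otimes>\<^bsub>semidirect A B s\<^esub> inv\<^bsub>semidirect A B s\<^esub> (a, b)
         = (a \<otimes>\<^bsub>A\<^esub> m \<otimes>\<^bsub>A\<^esub> inv\<^bsub>A\<^esub> a, s a u)"
proof -
  interpret B: comm_group B by (rule B)
  have "s (a \<otimes>\<^bsub>A\<^esub> m) (s (inv\<^bsub>A\<^esub> a) (inv\<^bsub>B\<^esub> b)) = inv\<^bsub>B\<^esub> b"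
    using trivial[of "inv\<^bsub>B\<^esub> b"] a m b by (simp add: act_mult[symmetric])
  moreover have "b \<otimes>\<^bsub>B\<^esub> s a u \<otimes>\<^bsub>B\<^esub> inv\<^bsub>B\<^esub> b = s a u"
    using a b u by (metis B.inv_closed B.m_assoc B.m_comm B.r_inv B.r_one act_closed)
  ultimately show ?thesis
    using a b m u by (simp add: inv_semidirect)
qed

end

lemma aut_action_trivial: "\<lbrakk>group A; group B\<rbrakk> \<Longrightarrow> aut_action A B (\<lambda>a b. b)"
  by (simp add: aut_action_def aut_action_axioms_def)

lemma aut_action_DirProd:
  assumes "aut_action A B s" "aut_action A C t"
  shows "aut_action A (B \<times>\<times> C) (\<lambda>a (b, c). (s a b, t a c))"
proof -
  interpret B: aut_action A B s by fact
  interpret C: aut_action A C t by fact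
  show ?thesis
    by (intro aut_action.intro aut_action_axioms.intro B.A.group_axioms
        DirProd_group B.B.group_axioms C.B.group_axioms)
      (auto simp: B.act_mult C.act_mult B.act_hom C.act_hom)
qed

lemma comm_group_DirProd:
  assumes "comm_group G" "comm_group H"
  shows "comm_group (G \<times>\<times> H)"
proof -
  interpret G: comm_group G by fact
  interpret H: comm_group H by fact
  show ?thesis
    by (intro group.group_comm_groupI DirProd_group G.is_group H.is_group) (auto simp: G.m_comm H.m_comm)
qed

lemma (in normal) FactGroup_lift_rcos:
  assumes h: "group_hom G K h" and N: "H \<subseteq> kernel G K h" and g: "g \<in> carrier G"
  shows "the_elem (h ` (H #> g)) = h g"
proof -
  interpret h: group_hom G K h by (rule h)
  have "h ` (H #> g) = {h g}"
  proof
    show "h ` (H #> g) \<subseteq> {h g}"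
      using N g by (auto simp: r_coset_def kernel_def)
    show "{h g} \<subseteq> h ` (H #> g)"
      using rcos_self[OF g is_subgroup] by blast
  qed
  then show ?thesis by simp
qed

lemma (in normal) FactGroup_lift_hom:
  assumes h: "group_hom G K h" and N: "H \<subseteq> kernel G K h"
  shows "(\<lambda>X. the_elem (h ` X)) \<in> hom (G Mod H) K"
proof (rule homI)
  fix X assume "X \<in> carrier (G Mod H)"
  then obtain g where "g \<in> carrier G" "X = H #> g" by (auto simp: FactGroup_def RCOSETS_def)
  then show "the_elem (h ` X) \<in> carrier K"
    using FactGroup_lift_rcos[OF h N] group_hom.hom_closed[OF h] by simp
next
  fix X Y assume "X \<in> carrier (G Mod H)" "Y \<in> carrier (G Mod H)"
  then obtain g g' where g: "g \<in> carrier G" "X = H #> g" and g': "g' \<in> carrier G" "Y = H #> g'"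
    by (auto simp: FactGroup_def RCOSETS_def)
  then show "the_elem (h ` (X \<otimes>\<^bsub>G Mod H\<^esub> Y)) = the_elem (h ` X) \<otimes>\<^bsub>K\<^esub> the_elem (h ` Y)"
    using FactGroup_lift_rcos[OF h N] group_hom.hom_mult[OF h] rcos_sum by (simp add: FactGroup_def)
qed

lemma group_hom_compose:
  assumes "group_hom A B g" "group_hom B C h"
  shows "group_hom A C (\<lambda>x. h (g x))"
  using assms hom_compose[of g A B h C]
  by (simp add: group_hom_def group_hom_axioms_def comp_def)

section \<open>Reduced crossed complexes\<close>

locale crossed_complex =
  fixes n :: nat and C :: "nat \<Rightarrow> 'a monoid" and d :: "nat \<Rightarrow> 'a \<Rightarrow> 'a"
    and act :: "nat \<Rightarrow> 'a \<Rightarrow> 'a \<Rightarrow> 'a"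
  assumes reduced_ncc: "reduced_ncc n C d act"
begin

lemma group_C: "\<lbrakk>1 \<le> k; k \<le> n\<rbrakk> \<Longrightarrow> group (C k)"
  using reduced_ncc by (simp add: reduced_ncc_def)

lemma comm_group_C: "\<lbrakk>3 \<le> k; k \<le> n\<rbrakk> \<Longrightarrow> comm_group (C k)"
  using reduced_ncc by (simp add: reduced_ncc_def)

lemma d_hom:
  assumes "2 \<le> k" "k \<le> n"
  shows "group_hom (C k) (C (k-1)) (d k)"
proof (intro group_hom.intro group_hom_axioms.intro)
  show "group (C k)" "group (C (k-1))"
    using assms group_C by simp_all
  show "d k \<in> hom (C k) (C (k-1))"
    using reduced_ncc assms unfolding reduced_ncc_def by (simp del: One_nat_def)
qed

lemma act_closed: "\<lbrakk>2 \<le> k; k \<le> n; g \<in> carrier (C 1); x \<in> carrier (C k)\<rbrakk> \<Longrightarrow> act k g x \<in> carrier (C k)"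
  using reduced_ncc unfolding reduced_ncc_def by (simp del: One_nat_def)

lemma act_one: "\<lbrakk>2 \<le> k; k \<le> n; x \<in> carrier (C k)\<rbrakk> \<Longrightarrow> act k \<one>\<^bsub>C 1\<^esub> x = x"
  using reduced_ncc unfolding reduced_ncc_def by (simp del: One_nat_def)

lemma act_mult:
  "\<lbrakk>2 \<le> k; k \<le> n; g \<in> carrier (C 1); h \<in> carrier (C 1); x \<in> carrier (C k)\<rbrakk>
   \<Longrightarrow> act k (g \<otimes>\<^bsub>C 1\<^esub> h) x = act k g (act k h x)"
  using reduced_ncc unfolding reduced_ncc_def by (simp del: One_nat_def)

lemma act_hom:
  "\<lbrakk>2 \<le> k; k \<le> n; g \<in> carrier (C 1); x \<in> carrier (C k); y \<in> carrier (C k)\<rbrakk>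
   \<Longrightarrow> act k g (x \<otimes>\<^bsub>C k\<^esub> y) = act k g x \<otimes>\<^bsub>C k\<^esub> act k g y"
  using reduced_ncc unfolding reduced_ncc_def by (simp del: One_nat_def)

lemma act_d2: "\<lbrakk>x \<in> carrier (C 2); y \<in> carrier (C 2)\<rbrakk> \<Longrightarrow> act 2 (d 2 x) y = x \<otimes>\<^bsub>C 2\<^esub> y \<otimes>\<^bsub>C 2\<^esub> inv\<^bsub>C 2\<^esub> x"
  using reduced_ncc unfolding reduced_ncc_def by (simp del: One_nat_def)

lemma d_act: "\<lbrakk>3 \<le> k; k \<le> n; g \<in> carrier (C 1); x \<in> carrier (C k)\<rbrakk> \<Longrightarrow> d k (act k g x) = act (k-1) g (d k x)"
  using reduced_ncc unfolding reduced_ncc_def by (simp del: One_nat_def)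

lemma d_d: "\<lbrakk>3 \<le> k; k \<le> n; x \<in> carrier (C k)\<rbrakk> \<Longrightarrow> d (k-1) (d k x) = \<one>\<^bsub>C (k-2)\<^esub>"
  using reduced_ncc unfolding reduced_ncc_def by (simp del: One_nat_def)

lemma aut_action_via_hom:
  assumes k: "2 \<le> k" "k \<le> n" and \<theta>: "group_hom A (C 1) \<theta>"
  shows "aut_action A (C k) (\<lambda>a. act k (\<theta> a))"
  using k group_hom.axioms(1)[OF \<theta>] group_C[of k] act_closed act_one act_mult act_hom
    group_hom.hom_closed[OF \<theta>] group_hom.hom_one[OF \<theta>] group_hom.hom_mult[OF \<theta>]
  by (simp add: aut_action_def aut_action_axioms_def)

lemma ker_d2_central:
  assumes "2 \<le> n" and y: "y \<in> carrier (C 2)" "d 2 y = \<one>\<^bsub>C 1\<^esub>" and z: "z \<in> carrier (C 2)"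
  shows "y \<otimes>\<^bsub>C 2\<^esub> z = z \<otimes>\<^bsub>C 2\<^esub> y"
proof -
  interpret C2: group "C 2" using group_C \<open>2 \<le> n\<close> by simp
  have "z = y \<otimes>\<^bsub>C 2\<^esub> z \<otimes>\<^bsub>C 2\<^esub> inv\<^bsub>C 2\<^esub> y"
    using act_d2[OF y(1) z] act_one[of 2 z] assms by simp
  then show ?thesis
    using y z by (metis C2.inv_solve_right' C2.m_closed)
qed

lemma d_act_d2:
  assumes "3 \<le> n" and a: "a \<in> carrier (C 2)" and x: "x \<in> carrier (C 3)"
  shows "d 3 (act 3 (d 2 a) x) = a \<otimes>\<^bsub>C 2\<^esub> d 3 x \<otimes>\<^bsub>C 2\<^esub> inv\<^bsub>C 2\<^esub> a"
  using assms d_act[of 3 "d 2 a" x] act_d2[OF a, of "d 3 x"]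
    group_hom.hom_closed[OF d_hom[of 2]] group_hom.hom_closed[OF d_hom[of 3]]
  by simp

lemma d_central:
  assumes k: "3 \<le> k" "k \<le> n" and b: "b \<in> carrier (C k)" and z: "z \<in> carrier (C (k-1))"
  shows "d k b \<otimes>\<^bsub>C (k-1)\<^esub> z = z \<otimes>\<^bsub>C (k-1)\<^esub> d k b"
proof (cases "k = 3")
  case True
  then show ?thesis
    using ker_d2_central[of "d 3 b" z] d_d[of 3 b] group_hom.hom_closed[OF d_hom[of 3]] k b z
    by simp
next
  case False
  then interpret C: comm_group "C (k-1)" using comm_group_C k by simp
  show ?thesis
    using C.m_comm group_hom.hom_closed[OF d_hom[of k] b] k z by simp
qed

lemma kerC_subset: "1 \<le> k \<Longrightarrow> kerC C d k \<subseteq> carrier (C k)"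
  by (auto simp: kerC_def)

lemma one_kerC: "\<lbrakk>1 \<le> k; k \<le> n\<rbrakk> \<Longrightarrow> \<one>\<^bsub>C k\<^esub> \<in> kerC C d k"
  using group_C[of k] d_hom[of k] by (auto simp: kerC_def group.is_monoid group_hom.hom_one)

lemma kerC_subgroup:
  assumes "1 \<le> k" "k \<le> n"
  shows "subgroup (kerC C d k) (C k)"
proof (cases "k = 1")
  case True
  then show ?thesis using group.subgroup_self[OF group_C[of 1]] assms by (simp add: kerC_def)
next
  case False
  then have "kerC C d k = kernel (C k) (C (k-1)) (d k)"
    using assms by (auto simp: kerC_def kernel_def)
  then show ?thesis
    using False assms group_hom.subgroup_kernel[OF d_hom[of k]] by simp
qed

lemma d_kerC: "\<lbrakk>2 \<le> k; k \<le> n; x \<in> carrier (C k)\<rbrakk> \<Longrightarrow> d k x \<in> kerC C d (k-1)"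
  using d_hom[of k] d_d[of k x] by (cases "k = 2") (auto simp: kerC_def group_hom.hom_closed numeral_2_eq_2)

lemma imC_subset_kerC:
  assumes "1 \<le> k" "k \<le> n"
  shows "imC n C d k \<subseteq> kerC C d k"
proof (cases "k = n")
  case True
  then show ?thesis using one_kerC assms by (simp add: imC_def)
next
  case False
  then show ?thesis
    using assms d_kerC[of "Suc k"] by (auto simp: imC_def)
qed

lemma imC_subgroup: "\<lbrakk>1 \<le> k; k \<le> n\<rbrakk> \<Longrightarrow> subgroup (imC n C d k) (C k)"
  using group.triv_subgroup[OF group_C[of k]] group_hom.img_is_subgroup[OF d_hom[of "Suc k"]]
  by (auto simp: imC_def)

end

section \<open>Weak equivalences and trivial fibrations\<close>

lemma carrier_pi_grp: "carrier (pi_grp n C d k) = (\<lambda>x. imC n C d k #>\<^bsub>C k\<^esub> x) ` kerC C d k"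
  by (auto simp: pi_grp_def FactGroup_def RCOSETS_def r_coset_def)

locale crossed_morphism =
  fixes n :: nat and C :: "nat \<Rightarrow> 'a monoid" and d :: "nat \<Rightarrow> 'a \<Rightarrow> 'a"
    and act :: "nat \<Rightarrow> 'a \<Rightarrow> 'a \<Rightarrow> 'a"
    and D :: "nat \<Rightarrow> 'b monoid" and e :: "nat \<Rightarrow> 'b \<Rightarrow> 'b" and act' :: "nat \<Rightarrow> 'b \<Rightarrow> 'b \<Rightarrow> 'b"
    and F :: "nat \<Rightarrow> 'a \<Rightarrow> 'b"
  assumes ncc_morphism: "ncc_morphism n C d act D e act' F"
begin

sublocale C: crossed_complex n C d act
  using ncc_morphism by unfold_locales (simp add: ncc_morphism_def)

sublocale D: crossed_complex n D e act'
  using ncc_morphism by unfold_locales (simp add: ncc_morphism_def)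

lemma F_hom:
  assumes "1 \<le> k" "k \<le> n"
  shows "group_hom (C k) (D k) (F k)"
  using ncc_morphism assms C.group_C D.group_C
  by (intro group_hom.intro group_hom_axioms.intro) (auto simp: ncc_morphism_def simp del: One_nat_def)

lemma F_d: "\<lbrakk>2 \<le> k; k \<le> n; x \<in> carrier (C k)\<rbrakk> \<Longrightarrow> F (k-1) (d k x) = e k (F k x)"
  using ncc_morphism unfolding ncc_morphism_def by (simp del: One_nat_def)

lemma F_act:
  "\<lbrakk>2 \<le> k; k \<le> n; g \<in> carrier (C 1); x \<in> carrier (C k)\<rbrakk> \<Longrightarrow> F k (act k g x) = act' k (F 1 g) (F k x)"
  using ncc_morphism unfolding ncc_morphism_def by (simp del: One_nat_def)

lemma F_imC: "\<lbrakk>1 \<le> k; k \<le> n; x \<in> imC n C d k\<rbrakk> \<Longrightarrow> F k x \<in> imC n D e k"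
  using F_hom[of k] F_hom[of "Suc k"] F_d[of "Suc k"]
  by (cases "k = n") (auto simp: imC_def group_hom.hom_one group_hom.hom_closed)

lemma fibC_subgroup:
  assumes k: "2 \<le> k" "k \<le> n"
  shows "subgroup (fibC C d D e F k) (C (k-1) \<times>\<times> D k)"
proof -
  interpret C: group "C (k-1)" using C.group_C k by simp
  interpret D: group "D k" using D.group_C k by simp
  interpret F: group_hom "C (k-1)" "D (k-1)" "F (k-1)" using F_hom k by simp
  interpret e: group_hom "D k" "D (k-1)" "e k" using D.d_hom k by simp
  interpret K: subgroup "kerC C d (k-1)" "C (k-1)" using C.kerC_subgroup k by simp
  interpret CD: group "C (k-1) \<times>\<times> D k" by (rule DirProd_group[OF C.is_group D.is_group])
  have fib: "z \<in> fibC C d D e F k \<longleftrightarrow>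
      fst z \<in> kerC C d (k-1) \<and> snd z \<in> carrier (D k) \<and> F (k-1) (fst z) = e k (snd z)" for z
    using k by (cases z) (simp add: fibC_def)
  show ?thesis
  proof (rule CD.subgroupI)
    show "fibC C d D e F k \<subseteq> carrier (C (k-1) \<times>\<times> D k)"
      using K.subset by (auto simp: fib)
    have "(\<one>\<^bsub>C (k-1)\<^esub>, \<one>\<^bsub>D k\<^esub>) \<in> fibC C d D e F k"
      unfolding fib using K.one_closed F.hom_one e.hom_one by simp
    then show "fibC C d D e F k \<noteq> {}" by blast
  next
    fix z assume "z \<in> fibC C d D e F k"
    then show "inv\<^bsub>C (k-1) \<times>\<times> D k\<^esub> z \<in> fibC C d D e F k"
      using K.subset by (cases z) (auto simp: fib F.hom_inv e.hom_inv simp del: One_nat_def)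
  next
    fix z w assume "z \<in> fibC C d D e F k" "w \<in> fibC C d D e F k"
    then show "z \<otimes>\<^bsub>C (k-1) \<times>\<times> D k\<^esub> w \<in> fibC C d D e F k"
      using K.subset by (cases z, cases w) (auto simp: fib simp del: One_nat_def)
  qed
qed

lemma fibGrp_group:
  assumes "2 \<le> k" "k \<le> n"
  shows "group (fibGrp C d D e F k)"
proof -
  have "group (C (k-1) \<times>\<times> D k)" using C.group_C D.group_C assms by (simp add: DirProd_group)
  then show ?thesis
    unfolding fibGrp_def using subgroup.subgroup_is_group[OF fibC_subgroup[OF assms]] by simp
qed

lemma pi_map_rcos:
  assumes k: "1 \<le> k" "k \<le> n" and x: "x \<in> kerC C d k"
  shows "pi_map n D e F k (imC n C d k #>\<^bsub>C k\<^esub> x) = imC n D e k #>\<^bsub>D k\<^esub> F k x"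
proof -
  interpret C: group "C k" using C.group_C k by simp
  interpret D: group "D k" using D.group_C k by simp
  interpret F: group_hom "C k" "D k" "F k" using F_hom k by simp
  have x_carrier: "x \<in> carrier (C k)" using C.kerC_subset k x by blast
  have "(SOME y. y \<in> imC n C d k #>\<^bsub>C k\<^esub> x) \<in> imC n C d k #>\<^bsub>C k\<^esub> x"
    using C.rcos_self[OF x_carrier C.imC_subgroup[OF k]] by (rule someI)
  then obtain m where m: "m \<in> imC n C d k"
    and rep: "(SOME y. y \<in> imC n C d k #>\<^bsub>C k\<^esub> x) = m \<otimes>\<^bsub>C k\<^esub> x"
    unfolding r_coset_def by blast
  have m_carrier: "m \<in> carrier (C k)" using subgroup.mem_carrier[OF C.imC_subgroup[OF k] m] .
  have "imC n D e k #>\<^bsub>D k\<^esub> (F k m \<otimes>\<^bsub>D k\<^esub> F k x) = imC n D e k #>\<^bsub>D k\<^esub> F k x"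
    using F_imC[OF k m] m_carrier x_carrier D.imC_subgroup[OF k]
    by (simp add: D.coset_mult_assoc[symmetric] D.coset_join2 subgroup.subset)
  then show ?thesis
    using m_carrier x_carrier by (simp add: pi_map_def rep)
qed

end

locale crossed_weak_equivalence = crossed_morphism +
  assumes pi_iso: "\<forall>k\<in>{1..n}. pi_map n D e F k \<in> iso (pi_grp n C d k) (pi_grp n D e k)"
begin

text \<open>Injectivity and surjectivity of \<pi>_k(F), phrased on representatives.\<close>

lemma imC_reflect:
  assumes k: "1 \<le> k" "k \<le> n" and x: "x \<in> kerC C d k" and Fx: "F k x \<in> imC n D e k"
  shows "x \<in> imC n C d k"
proof -
  interpret C: group "C k" using C.group_C k by simp
  interpret D: group "D k" using D.group_C k by simp
  interpret F: group_hom "C k" "D k" "F k" using F_hom k by simp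
  have sub: "subgroup (imC n C d k) (C k)" "subgroup (imC n D e k) (D k)"
    using C.imC_subgroup D.imC_subgroup k by auto
  have x_carrier: "x \<in> carrier (C k)" using C.kerC_subset k x by blast
  have one: "\<one>\<^bsub>C k\<^esub> \<in> kerC C d k" using C.one_kerC k by simp
  have "pi_map n D e F k (imC n C d k #>\<^bsub>C k\<^esub> x) = pi_map n D e F k (imC n C d k #>\<^bsub>C k\<^esub> \<one>\<^bsub>C k\<^esub>)"
    using pi_map_rcos[OF k x] pi_map_rcos[OF k one] D.coset_join2[OF _ sub(2) Fx] sub x_carrier
    by (simp add: D.coset_mult_one subgroup.subset)
  moreover have "inj_on (pi_map n D e F k) (carrier (pi_grp n C d k))"
    using pi_iso k by (auto simp: iso_def bij_betw_def)
  ultimately have "imC n C d k #>\<^bsub>C k\<^esub> x = imC n C d k #>\<^bsub>C k\<^esub> \<one>\<^bsub>C k\<^esub>"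
    using x one by (auto simp: carrier_pi_grp inj_on_def)
  then show ?thesis
    using C.rcos_self[OF x_carrier sub(1)] sub(1) by (simp add: C.coset_mult_one subgroup.subset)
qed

lemma kerC_lift_mod_imC:
  assumes k: "1 \<le> k" "k \<le> n" and h: "h \<in> kerC D e k"
  shows "\<exists>x\<in>kerC C d k. \<exists>m\<in>imC n D e k. h = m \<otimes>\<^bsub>D k\<^esub> F k x"
proof -
  interpret D: group "D k" using D.group_C k by simp
  have "imC n D e k #>\<^bsub>D k\<^esub> h \<in> carrier (pi_grp n D e k)"
    using h by (simp add: carrier_pi_grp)
  moreover have "pi_map n D e F k ` carrier (pi_grp n C d k) = carrier (pi_grp n D e k)"
    using pi_iso k by (auto simp: iso_def bij_betw_def)
  ultimately obtain X where "X \<in> carrier (pi_grp n C d k)"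
    and X: "pi_map n D e F k X = imC n D e k #>\<^bsub>D k\<^esub> h"
    by (metis imageE)
  then obtain x where x: "x \<in> kerC C d k" and "X = imC n C d k #>\<^bsub>C k\<^esub> x"
    by (auto simp: carrier_pi_grp)
  then have "imC n D e k #>\<^bsub>D k\<^esub> h = imC n D e k #>\<^bsub>D k\<^esub> F k x"
    using pi_map_rcos[OF k x] X by simp
  moreover have "h \<in> imC n D e k #>\<^bsub>D k\<^esub> h"
    using D.rcos_self D.imC_subgroup D.kerC_subset h k by blast
  ultimately show ?thesis
    using x by (auto simp: r_coset_def)
qed

lemma top_cycle_eq_one:
  assumes "2 \<le> n" "x \<in> carrier (C n)" "d n x = \<one>\<^bsub>C (n-1)\<^esub>" "F n x = \<one>\<^bsub>D n\<^esub>"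
  shows "x = \<one>\<^bsub>C n\<^esub>"
  using imC_reflect[of n x] assms by (simp add: kerC_def imC_def)

end

locale crossed_trivial_fibration = crossed_weak_equivalence +
  assumes F_surj: "\<forall>k\<in>{1..n}. F k ` carrier (C k) = carrier (D k)"
begin

lemma imC_lift:
  assumes k: "1 \<le> k" "k \<le> n" and m: "m \<in> imC n D e k"
  shows "\<exists>z\<in>imC n C d k. m = F k z"
proof (cases "k = n")
  case True
  then show ?thesis
    using m F_hom[OF k] C.one_kerC k by (auto simp: imC_def group_hom.hom_one)
next
  case False
  then obtain b where b: "b \<in> carrier (D (Suc k))" and mb: "m = e (Suc k) b"
    using m by (auto simp: imC_def)
  then obtain z where z: "z \<in> carrier (C (Suc k))" and bz: "b = F (Suc k) z"
    using F_surj False k by (metis atLeastAtMost_iff imageE le_SucI not_less_eq_eq le_antisym)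
  then have "m = F k (d (Suc k) z)"
    using F_d[of "Suc k" z] False k mb by simp
  then show ?thesis
    using z False by (auto simp: imC_def)
qed

lemma kerC_lift:
  assumes k: "1 \<le> k" "k \<le> n" and h: "h \<in> kerC D e k"
  shows "\<exists>a\<in>kerC C d k. F k a = h"
proof -
  interpret K: subgroup "kerC C d k" "C k" using C.kerC_subgroup k by simp
  interpret F: group_hom "C k" "D k" "F k" using F_hom k by simp
  obtain x m where x: "x \<in> kerC C d k" and m: "m \<in> imC n D e k" and h_eq: "h = m \<otimes>\<^bsub>D k\<^esub> F k x"
    using kerC_lift_mod_imC[OF k h] by blast
  obtain z where z: "z \<in> imC n C d k" and m_eq: "m = F k z"
    using imC_lift[OF k m] by blast
  have "z \<in> kerC C d k" using C.imC_subset_kerC[OF k] z by blast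
  then show ?thesis
    using x h_eq m_eq by (intro bexI[of _ "z \<otimes>\<^bsub>C k\<^esub> x"]) auto
qed

lemma fibC_lift:
  assumes k: "2 \<le> k" "k \<le> n" and xy: "(x, y) \<in> fibC C d D e F k"
  shows "\<exists>a\<in>carrier (C k). d k a = x \<and> F k a = y"
proof -
  interpret Dk: group "D k" using D.group_C k by simp
  interpret F: group_hom "C k" "D k" "F k" using F_hom k by simp
  interpret d: group_hom "C k" "C (k-1)" "d k" using C.d_hom k by simp
  interpret e: group_hom "D k" "D (k-1)" "e k" using D.d_hom k by simp
  have x: "x \<in> kerC C d (k-1)" and y: "y \<in> carrier (D k)" and Fx: "F (k-1) x = e k y"
    using xy k by (auto simp: fibC_def)
  have k_pred: "Suc (k-1) = k" "k - 1 \<noteq> n" using k by auto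
  then have "F (k-1) x \<in> imC n D e (k-1)"
    using Fx y by (simp add: imC_def)
  then have "x \<in> imC n C d (k-1)"
    using imC_reflect[OF _ _ x] k by simp
  then obtain a0 where a0: "a0 \<in> carrier (C k)" and x_a0: "x = d k a0"
    using k_pred by (auto simp: imC_def)
  define h where "h = inv\<^bsub>D k\<^esub> (F k a0) \<otimes>\<^bsub>D k\<^esub> y"
  have "e k h = \<one>\<^bsub>D (k-1)\<^esub>"
    using F_d[OF k a0] Fx x_a0 a0 y by (simp add: h_def e.hom_inv e.H.l_inv del: One_nat_def)
  then have "h \<in> kerC D e k"
    using k a0 y by (simp add: kerC_def h_def)
  then obtain a1 where "a1 \<in> kerC C d k" and a1: "F k a1 = h"
    using kerC_lift[of k h] k by auto
  then have "a1 \<in> carrier (C k)" "d k a1 = \<one>\<^bsub>C (k-1)\<^esub>"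
    using k by (auto simp: kerC_def simp del: One_nat_def)
  moreover have "F k a0 \<otimes>\<^bsub>D k\<^esub> h = y"
    using a0 y by (simp add: h_def Dk.m_assoc[symmetric])
  ultimately show ?thesis
    using a0 a1 x_a0 by (intro bexI[of _ "a0 \<otimes>\<^bsub>C k\<^esub> a1"]) (simp_all del: One_nat_def)
qed

lemma u_map_surj:
  assumes k: "1 \<le> k" "k \<le> n"
  shows "u_map C d F k ` carrier (C k) = fibC C d D e F k"
proof (cases "k = 1")
  case True
  have "F 1 ` carrier (C 1) = carrier (D 1)" using F_surj k by simp
  then show ?thesis
    using True by (auto simp: u_map_def fibC_def kerC_def image_def)
next
  case False
  then have k2: "2 \<le> k" using k by simp
  show ?thesis
  proof
    show "u_map C d F k ` carrier (C k) \<subseteq> fibC C d D e F k"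
      using C.d_kerC[OF k2 k(2)] F_d[OF k2 k(2)] group_hom.hom_closed[OF F_hom[OF k]] k2
      by (auto simp: u_map_def fibC_def)
    show "fibC C d D e F k \<subseteq> u_map C d F k ` carrier (C k)"
      using fibC_lift[OF k2 k(2)] False by (force simp: u_map_def)
  qed
qed

end

section \<open>The n-pushout\<close>

text \<open>Degree indices such as n - 1 must stay literal (not n - Suc 0) to match the interpreted structures.\<close>
declare One_nat_def [simp del]

lemma sdp_semidirect:
  "sdp n Q xi H actH G actG p f = semidirect (Q (n-1)) (H n \<times>\<times> G n) (sdp_act n xi actH actG p f)"
  by (simp add: sdp_def semidirect_def DirProd_def Let_def split_beta fun_eq_iff)

locale ncc_pushout =
  p: crossed_trivial_fibration n Q xi actQ H dH actH p +
  f: crossed_morphism n Q xi actQ G dG actG f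
  for n :: nat
    and Q :: "nat \<Rightarrow> 'q monoid" and xi :: "nat \<Rightarrow> 'q \<Rightarrow> 'q" and actQ :: "nat \<Rightarrow> 'q \<Rightarrow> 'q \<Rightarrow> 'q"
    and H :: "nat \<Rightarrow> 'h monoid" and dH :: "nat \<Rightarrow> 'h \<Rightarrow> 'h" and actH :: "nat \<Rightarrow> 'h \<Rightarrow> 'h \<Rightarrow> 'h"
    and G :: "nat \<Rightarrow> 'g monoid" and dG :: "nat \<Rightarrow> 'g \<Rightarrow> 'g" and actG :: "nat \<Rightarrow> 'g \<Rightarrow> 'g \<Rightarrow> 'g"
    and p :: "nat \<Rightarrow> 'q \<Rightarrow> 'h" and f :: "nat \<Rightarrow> 'q \<Rightarrow> 'g" +
  assumes n3: "3 \<le> n"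
begin

abbreviation "\<sigma> \<equiv> sdp_act n xi actH actG p f"
abbreviation "S \<equiv> semidirect (Q (n-1)) (H n \<times>\<times> G n) \<sigma>"
abbreviation "N \<equiv> sdpN n Q xi p f"
abbreviation "Fib \<equiv> fibGrp Q xi H dH p (n-1)"

sublocale Qn: comm_group "Q n" using p.C.comm_group_C n3 by simp
sublocale Hn: comm_group "H n" using p.D.comm_group_C n3 by simp
sublocale Gn: comm_group "G n" using f.D.comm_group_C n3 by simp
sublocale xi: group_hom "Q n" "Q (n-1)" "xi n" using p.C.d_hom n3 by simp
sublocale xi1: group_hom "Q (n-1)" "Q (n-2)" "xi (n-1)" using p.C.d_hom[of "n-1"] n3 by simp
sublocale pn: group_hom "Q n" "H n" "p n" using p.F_hom n3 by simp
sublocale p1: group_hom "Q (n-1)" "H (n-1)" "p (n-1)" using p.F_hom n3 by simp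
sublocale fn: group_hom "Q n" "G n" "f n" using f.F_hom n3 by simp
sublocale dHn: group_hom "H n" "H (n-1)" "dH n" using p.D.d_hom n3 by simp

lemma sdp_act_aut_action: "aut_action (Q (n-1)) (H n \<times>\<times> G n) \<sigma>"
proof (cases "n = 3")
  case True
  have "group_hom (Q 2) (Q 1) (xi 2)"
    using True p.C.d_hom[of 2] by (simp add: One_nat_def)
  then have \<theta>: "group_hom (Q 2) (H 1) (\<lambda>a. p 1 (xi 2 a))" "group_hom (Q 2) (G 1) (\<lambda>a. f 1 (xi 2 a))"
    using True group_hom_compose p.F_hom[of 1] f.F_hom[of 1] by simp_all
  have "aut_action (Q 2) (H 3 \<times>\<times> G 3) (\<lambda>a (b, c). (actH 3 (p 1 (xi 2 a)) b, actG 3 (f 1 (xi 2 a)) c))"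
    using True p.D.aut_action_via_hom[OF _ _ \<theta>(1)] f.D.aut_action_via_hom[OF _ _ \<theta>(2)]
    by (intro aut_action_DirProd) simp_all
  moreover have "\<sigma> = (\<lambda>a (b, c). (actH 3 (p 1 (xi 2 a)) b, actG 3 (f 1 (xi 2 a)) c))"
    using True by (simp add: sdp_act_def fun_eq_iff)
  ultimately show ?thesis using True by simp
next
  case False
  then have "\<sigma> = (\<lambda>a z. z)" by (simp add: sdp_act_def fun_eq_iff split_beta)
  then show ?thesis
    by (simp add: aut_action_trivial DirProd_group xi.H.is_group Hn.is_group Gn.is_group)
qed

sublocale \<sigma>: aut_action "Q (n-1)" "H n \<times>\<times> G n" \<sigma>
  by (rule sdp_act_aut_action)

lemma sdp_act_boundary:
  assumes "x \<in> carrier (Q n)" "z \<in> carrier (H n \<times>\<times> G n)"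
  shows "\<sigma> (xi n x) z = z"
proof (cases "n = 3")
  case True
  have "xi 2 (xi 3 x) = \<one>\<^bsub>Q 1\<^esub>" using p.C.d_d[of 3 x] assms True by (simp add: One_nat_def)
  then show ?thesis
    using True assms p.D.act_one[of 3] f.D.act_one[of 3]
      group_hom.hom_one[OF p.F_hom[of 1]] group_hom.hom_one[OF f.F_hom[of 1]]
    by (auto simp: sdp_act_def)
qed (simp add: sdp_act_def split_beta)

definition nu :: "'q \<Rightarrow> 'q \<times> 'h \<times> 'g" where
  "nu x = (inv\<^bsub>Q (n-1)\<^esub> (xi n x), p n x, f n x)"

lemma sdpN_eq_image_nu: "N = nu ` carrier (Q n)"
  by (simp add: sdpN_def nu_def[abs_def])

lemma nu_hom: "group_hom (Q n) S nu"
proof (intro group_hom.intro group_hom_axioms.intro homI)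
  fix x assume "x \<in> carrier (Q n)"
  then show "nu x \<in> carrier S" by (simp add: nu_def)
next
  fix x y assume x: "x \<in> carrier (Q n)" and y: "y \<in> carrier (Q n)"
  have "\<sigma> (inv\<^bsub>Q (n-1)\<^esub> (xi n x)) (p n y, f n y) = (p n y, f n y)"
    using sdp_act_boundary[of "inv\<^bsub>Q n\<^esub> x"] x y by (simp add: xi.hom_inv)
  moreover have "inv\<^bsub>Q (n-1)\<^esub> (xi n (x \<otimes>\<^bsub>Q n\<^esub> y))
      = inv\<^bsub>Q (n-1)\<^esub> (xi n x) \<otimes>\<^bsub>Q (n-1)\<^esub> inv\<^bsub>Q (n-1)\<^esub> (xi n y)"
    using x y by (simp add: Qn.m_comm[OF x y] xi.H.inv_mult_group)
  ultimately show "nu (x \<otimes>\<^bsub>Q n\<^esub> y) = nu x \<otimes>\<^bsub>S\<^esub> nu y"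
    using x y by (simp add: nu_def)
qed (simp_all add: Qn.is_group \<sigma>.semidirect_group)

text \<open>For n = 3 the witness is the action of \<xi>_2 a on x (crossed-module identity);
  for n \<ge> 4 everything involved commutes.\<close>

lemma xi_conj:
  assumes a: "a \<in> carrier (Q (n-1))" and x: "x \<in> carrier (Q n)"
  shows "\<exists>x'\<in>carrier (Q n).
           a \<otimes>\<^bsub>Q (n-1)\<^esub> inv\<^bsub>Q (n-1)\<^esub> (xi n x) \<otimes>\<^bsub>Q (n-1)\<^esub> inv\<^bsub>Q (n-1)\<^esub> a = inv\<^bsub>Q (n-1)\<^esub> (xi n x')
         \<and> \<sigma> a (p n x, f n x) = (p n x', f n x')"
proof (cases "n = 3")
  case True
  interpret Q2: group "Q 2" using p.C.group_C True by simp
  have g: "xi 2 a \<in> carrier (Q 1)"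
    using group_hom.hom_closed[OF p.C.d_hom[of 2]] a True by (simp add: One_nat_def)
  define x' where "x' = actQ 3 (xi 2 a) x"
  have x': "x' \<in> carrier (Q 3)"
    using p.C.act_closed[of 3] g x True by (simp add: x'_def)
  have "xi 3 x' = a \<otimes>\<^bsub>Q 2\<^esub> xi 3 x \<otimes>\<^bsub>Q 2\<^esub> inv\<^bsub>Q 2\<^esub> a"
    using p.C.d_act_d2 a x True by (simp add: x'_def)
  then have "a \<otimes>\<^bsub>Q 2\<^esub> inv\<^bsub>Q 2\<^esub> (xi 3 x) \<otimes>\<^bsub>Q 2\<^esub> inv\<^bsub>Q 2\<^esub> a = inv\<^bsub>Q 2\<^esub> (xi 3 x')"
    using a x True group_hom.hom_closed[OF p.C.d_hom[of 3]]
    by (simp add: Q2.inv_mult_group Q2.m_assoc)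
  moreover have "\<sigma> a (p n x, f n x) = (p n x', f n x')"
    using p.F_act[of 3 "xi 2 a" x] f.F_act[of 3 "xi 2 a" x] g x True by (simp add: sdp_act_def x'_def)
  ultimately show ?thesis
    using x' True by auto
next
  case False
  then interpret Q1: comm_group "Q (n-1)" using p.C.comm_group_C n3 by simp
  have "a \<otimes>\<^bsub>Q (n-1)\<^esub> inv\<^bsub>Q (n-1)\<^esub> (xi n x) \<otimes>\<^bsub>Q (n-1)\<^esub> inv\<^bsub>Q (n-1)\<^esub> a = inv\<^bsub>Q (n-1)\<^esub> (xi n x)"
    using a x xi.hom_closed
    by (metis xi.H.inv_closed xi.H.m_assoc Q1.m_comm xi.H.r_inv xi.H.r_one)
  then show ?thesis
    using x False by (auto simp: sdp_act_def)
qed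

lemma sdpN_normal: "N \<lhd> S"
proof -
  interpret \<nu>: group_hom "Q n" S nu by (rule nu_hom)
  have "s \<otimes>\<^bsub>S\<^esub> nu x \<otimes>\<^bsub>S\<^esub> inv\<^bsub>S\<^esub> s \<in> nu ` carrier (Q n)"
    if s: "s \<in> carrier S" and x: "x \<in> carrier (Q n)" for s x
  proof -
    obtain a b where s_eq: "s = (a, b)" and a: "a \<in> carrier (Q (n-1))" and b: "b \<in> carrier (H n \<times>\<times> G n)"
      using s by auto
    obtain x' where x': "x' \<in> carrier (Q n)"
      and conj: "a \<otimes>\<^bsub>Q (n-1)\<^esub> inv\<^bsub>Q (n-1)\<^esub> (xi n x) \<otimes>\<^bsub>Q (n-1)\<^esub> inv\<^bsub>Q (n-1)\<^esub> a = inv\<^bsub>Q (n-1)\<^esub> (xi n x')"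
      and act: "\<sigma> a (p n x, f n x) = (p n x', f n x')"
      using xi_conj[OF a x] by blast
    have "s \<otimes>\<^bsub>S\<^esub> nu x \<otimes>\<^bsub>S\<^esub> inv\<^bsub>S\<^esub> s = nu x'"
      unfolding s_eq nu_def
    proof (subst \<sigma>.conj_semidirect)
      show "comm_group (H n \<times>\<times> G n)"
        by (simp add: comm_group_DirProd Hn.comm_group_axioms Gn.comm_group_axioms)
      show "\<sigma> (a \<otimes>\<^bsub>Q (n-1)\<^esub> inv\<^bsub>Q (n-1)\<^esub> (xi n x) \<otimes>\<^bsub>Q (n-1)\<^esub> inv\<^bsub>Q (n-1)\<^esub> a) z = z"
        if "z \<in> carrier (H n \<times>\<times> G n)" for z
        using sdp_act_boundary[of "inv\<^bsub>Q n\<^esub> x'"] that x' conj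
        by simp
    qed (use a b x act conj in simp_all)
    then show ?thesis using x' by blast
  qed
  then show ?thesis
    using \<sigma>.S.normal_inv_iff \<nu>.img_is_subgroup by (auto simp: sdpN_eq_image_nu)
qed

definition phi :: "'q \<times> 'h \<times> 'g \<Rightarrow> 'q \<times> 'h" where
  "phi s = (xi (n-1) (fst s), p (n-1) (fst s) \<otimes>\<^bsub>H (n-1)\<^esub> dH n (fst (snd s)))"

definition u :: "('q \<times> 'h \<times> 'g) set \<Rightarrow> 'q \<times> 'h" where
  "u X = the_elem (phi ` X)"

lemma dH_sdp_act:
  assumes a: "a \<in> carrier (Q (n-1))" and b: "b \<in> carrier (H n)" and c: "c \<in> carrier (G n)"
  shows "dH n (fst (\<sigma> a (b, c))) = dH n b"
proof (cases "n = 3")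
  case True
  interpret H2: group "H 2" using p.D.group_C True by simp
  have pa: "p 2 a \<in> carrier (H 2)" and db: "dH 3 b \<in> carrier (H 2)"
    using group_hom.hom_closed[OF p.F_hom[of 2]] group_hom.hom_closed[OF p.D.d_hom[of 3]] a b True
    by simp_all
  have "dH 3 (actH 3 (p 1 (xi 2 a)) b) = dH 3 (actH 3 (dH 2 (p 2 a)) b)"
    using p.F_d[of 2 a] a True by (simp add: One_nat_def)
  also have "\<dots> = p 2 a \<otimes>\<^bsub>H 2\<^esub> dH 3 b \<otimes>\<^bsub>H 2\<^esub> inv\<^bsub>H 2\<^esub> (p 2 a)"
    using p.D.d_act_d2 pa b True by simp
  also have "\<dots> = dH 3 b \<otimes>\<^bsub>H 2\<^esub> p 2 a \<otimes>\<^bsub>H 2\<^esub> inv\<^bsub>H 2\<^esub> (p 2 a)"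
    using p.D.d_central[of 3 b "p 2 a"] pa b True by simp
  also have "\<dots> = dH 3 b"
    using pa db by (simp add: H2.m_assoc)
  finally show ?thesis
    using True by (simp add: sdp_act_def)
qed (simp add: sdp_act_def)

lemma phi_hom: "group_hom S Fib phi"
proof -
  interpret dH1: group_hom "H (n-1)" "H (n-2)" "dH (n-1)"
    using p.D.d_hom[of "n-1"] n3 by (simp add: numeral_2_eq_2)
  have fib: "z \<in> carrier Fib \<longleftrightarrow>
      fst z \<in> kerC Q xi (n-2) \<and> snd z \<in> carrier (H (n-1)) \<and> p (n-2) (fst z) = dH (n-1) (snd z)" for z
    using n3 by (cases z) (auto simp: fibGrp_def fibC_def)
  show ?thesis
  proof (intro group_hom.intro group_hom_axioms.intro homI)
    fix s assume "s \<in> carrier S"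
    then obtain a b c where s: "s = (a, b, c)" "a \<in> carrier (Q (n-1))" "b \<in> carrier (H n)" "c \<in> carrier (G n)"
      by auto
    have "dH (n-1) (dH n b) = \<one>\<^bsub>H (n-2)\<^esub>"
      using p.D.d_d[of n b] n3 s by simp
    moreover have "2 \<le> n - 1" "n - 1 \<le> n" using n3 by auto
    ultimately show "phi s \<in> carrier Fib"
      using p.C.d_kerC[of "n-1" a] p.F_d[of "n-1" a] s
      by (simp add: fib phi_def)
  next
    fix s t assume "s \<in> carrier S" "t \<in> carrier S"
    then obtain a b c a' b' c' where s: "s = (a, b, c)" "a \<in> carrier (Q (n-1))" "b \<in> carrier (H n)" "c \<in> carrier (G n)"
      and t: "t = (a', b', c')" "a' \<in> carrier (Q (n-1))" "b' \<in> carrier (H n)" "c' \<in> carrier (G n)"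
      by auto
    have "dH n b \<otimes>\<^bsub>H (n-1)\<^esub> p (n-1) a' = p (n-1) a' \<otimes>\<^bsub>H (n-1)\<^esub> dH n b"
      using p.D.d_central[of n b] n3 s t by simp
    then have "p (n-1) a \<otimes>\<^bsub>H (n-1)\<^esub> p (n-1) a' \<otimes>\<^bsub>H (n-1)\<^esub> (dH n b \<otimes>\<^bsub>H (n-1)\<^esub> dH n b')
        = (p (n-1) a \<otimes>\<^bsub>H (n-1)\<^esub> dH n b) \<otimes>\<^bsub>H (n-1)\<^esub> (p (n-1) a' \<otimes>\<^bsub>H (n-1)\<^esub> dH n b')"
      using s t by (simp add: p1.H.m_assoc[symmetric]) (simp add: p1.H.m_assoc)
    moreover have "fst (\<sigma> a (b', c')) \<in> carrier (H n)"
      using \<sigma>.act_closed[of a "(b', c')"] s t by (auto simp: split_beta)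
    ultimately show "phi (s \<otimes>\<^bsub>S\<^esub> t) = phi s \<otimes>\<^bsub>Fib\<^esub> phi t"
      using dH_sdp_act[of a b' c'] s t by (simp add: phi_def fibGrp_def mult_DirProd')
  qed (use n3 p.fibGrp_group[of "n-1"] in \<open>simp_all add: \<sigma>.semidirect_group\<close>)
qed

lemma one_Fib: "\<one>\<^bsub>Fib\<^esub> = (\<one>\<^bsub>Q (n-2)\<^esub>, \<one>\<^bsub>H (n-1)\<^esub>)"
  by (simp add: fibGrp_def)

lemma phi_nu: "x \<in> carrier (Q n) \<Longrightarrow> phi (nu x) = \<one>\<^bsub>Fib\<^esub>"
  using p.C.d_d[of n x] p.F_d[of n x] n3 by (simp add: phi_def nu_def one_Fib)

lemma sdpN_subset_kernel: "N \<subseteq> kernel S Fib phi"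
  using phi_nu group_hom.hom_closed[OF nu_hom]
  by (simp add: sdpN_eq_image_nu kernel_def image_subset_iff)

lemma u_hom: "u \<in> hom (S Mod N) Fib"
  unfolding u_def by (rule normal.FactGroup_lift_hom[OF sdpN_normal phi_hom sdpN_subset_kernel])

lemma u_rcos: "s \<in> carrier S \<Longrightarrow> u (N #>\<^bsub>S\<^esub> s) = phi s"
  unfolding u_def by (rule normal.FactGroup_lift_rcos[OF sdpN_normal phi_hom sdpN_subset_kernel])

definition incl :: "'g \<Rightarrow> ('q \<times> 'h \<times> 'g) set" where
  "incl c = N #>\<^bsub>S\<^esub> (\<one>\<^bsub>Q (n-1)\<^esub>, \<one>\<^bsub>H n\<^esub>, c)"

lemma nu_mult_incl:
  assumes x: "x \<in> carrier (Q n)" and c: "c \<in> carrier (G n)"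
  shows "nu x \<otimes>\<^bsub>S\<^esub> (\<one>\<^bsub>Q (n-1)\<^esub>, \<one>\<^bsub>H n\<^esub>, c) = (inv\<^bsub>Q (n-1)\<^esub> (xi n x), p n x, f n x \<otimes>\<^bsub>G n\<^esub> c)"
proof -
  have "\<sigma> (inv\<^bsub>Q (n-1)\<^esub> (xi n x)) (\<one>\<^bsub>H n\<^esub>, c) = (\<one>\<^bsub>H n\<^esub>, c)"
    using sdp_act_boundary[of "inv\<^bsub>Q n\<^esub> x"] x c by (simp add: xi.hom_inv)
  then show ?thesis
    using x by (simp add: nu_def)
qed

lemma incl_hom: "incl \<in> hom (G n) (S Mod N)"
proof (rule homI)
  interpret N: normal N S by (rule sdpN_normal)
  fix c assume "c \<in> carrier (G n)"
  then show "incl c \<in> carrier (S Mod N)"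
    by (auto simp: incl_def FactGroup_def RCOSETS_def)
next
  interpret N: normal N S by (rule sdpN_normal)
  fix c c' assume c: "c \<in> carrier (G n)" and c': "c' \<in> carrier (G n)"
  have "(\<one>\<^bsub>Q (n-1)\<^esub>, \<one>\<^bsub>H n\<^esub>, c) \<otimes>\<^bsub>S\<^esub> (\<one>\<^bsub>Q (n-1)\<^esub>, \<one>\<^bsub>H n\<^esub>, c')
      = (\<one>\<^bsub>Q (n-1)\<^esub>, \<one>\<^bsub>H n\<^esub>, c \<otimes>\<^bsub>G n\<^esub> c')"
    using c c' \<sigma>.act_one[of "(\<one>\<^bsub>H n\<^esub>, c')"] by simp
  then show "incl (c \<otimes>\<^bsub>G n\<^esub> c') = incl c \<otimes>\<^bsub>S Mod N\<^esub> incl c'"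
    using N.rcos_sum c c' by (simp add: incl_def FactGroup_def)
qed

lemma incl_inj: "inj_on incl (carrier (G n))"
proof (rule inj_onI)
  interpret N: normal N S by (rule sdpN_normal)
  fix c c' assume c: "c \<in> carrier (G n)" and c': "c' \<in> carrier (G n)" and eq: "incl c = incl c'"
  have "(\<one>\<^bsub>Q (n-1)\<^esub>, \<one>\<^bsub>H n\<^esub>, c) \<in> incl c'"
    using eq \<sigma>.S.rcos_self[OF _ N.is_subgroup, of "(\<one>\<^bsub>Q (n-1)\<^esub>, \<one>\<^bsub>H n\<^esub>, c)"] c
    by (simp add: incl_def)
  then obtain x where x: "x \<in> carrier (Q n)"
    and "(\<one>\<^bsub>Q (n-1)\<^esub>, \<one>\<^bsub>H n\<^esub>, c) = nu x \<otimes>\<^bsub>S\<^esub> (\<one>\<^bsub>Q (n-1)\<^esub>, \<one>\<^bsub>H n\<^esub>, c')"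
    by (auto simp: incl_def r_coset_def sdpN_eq_image_nu)
  then have xi_x: "inv\<^bsub>Q (n-1)\<^esub> (xi n x) = \<one>\<^bsub>Q (n-1)\<^esub>" and p_x: "p n x = \<one>\<^bsub>H n\<^esub>"
    and c_eq: "c = f n x \<otimes>\<^bsub>G n\<^esub> c'"
    using nu_mult_incl[OF x c'] by auto
  have "xi n x = \<one>\<^bsub>Q (n-1)\<^esub>"
    using xi_x xi.hom_closed[OF x] by (metis xi.H.inv_eq_1_iff)
  then have "x = \<one>\<^bsub>Q n\<^esub>"
    using p.top_cycle_eq_one[OF _ x _ p_x] n3 by simp
  then show "c = c'"
    using c_eq c' fn.hom_one by simp
qed

text \<open>(a, b\<inverse>) lies in the fibre product of degree n, and a lift y of it
  gives \<nu>(y\<inverse>) = (a, b, f_n(y\<inverse>)).\<close>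

lemma rcos_incl_of_phi_one:
  assumes s: "s \<in> carrier S" and phi_s: "phi s = \<one>\<^bsub>Fib\<^esub>"
  shows "\<exists>c\<in>carrier (G n). N #>\<^bsub>S\<^esub> s = incl c"
proof -
  interpret N: normal N S by (rule sdpN_normal)
  obtain a b c where s_eq: "s = (a, b, c)" and a: "a \<in> carrier (Q (n-1))"
    and b: "b \<in> carrier (H n)" and c: "c \<in> carrier (G n)"
    using s by auto
  have xi_a: "xi (n-1) a = \<one>\<^bsub>Q (n-2)\<^esub>"
    and pa_db: "p (n-1) a \<otimes>\<^bsub>H (n-1)\<^esub> dH n b = \<one>\<^bsub>H (n-1)\<^esub>"
    using phi_s by (simp_all add: phi_def one_Fib s_eq)
  have "p (n-1) a = dH n (inv\<^bsub>H n\<^esub> b)"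
    using p1.H.inv_equality[OF pa_db] a b p1.hom_closed
    by (simp add: dHn.hom_inv)
  moreover have "n - 1 \<noteq> 0" "n - 1 \<noteq> 1" "n - 1 - 1 = n - 2" using n3 by auto
  ultimately have "(a, inv\<^bsub>H n\<^esub> b) \<in> fibC Q xi H dH p n"
    using a b xi_a n3 by (simp add: fibC_def kerC_def)
  then obtain y where y: "y \<in> carrier (Q n)" "xi n y = a" "p n y = inv\<^bsub>H n\<^esub> b"
    using p.fibC_lift[of n] n3 by auto
  define z where "z = inv\<^bsub>Q n\<^esub> y"
  define c' where "c' = inv\<^bsub>G n\<^esub> (f n z) \<otimes>\<^bsub>G n\<^esub> c"
  have z: "z \<in> carrier (Q n)" and c': "c' \<in> carrier (G n)"
    using y c by (simp_all add: z_def c'_def)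
  have "nu z \<otimes>\<^bsub>S\<^esub> (\<one>\<^bsub>Q (n-1)\<^esub>, \<one>\<^bsub>H n\<^esub>, c') = s"
    using nu_mult_incl[OF z c'] y z c b
    by (simp add: s_eq z_def c'_def Gn.m_assoc[symmetric] xi.H.inv_inv[OF a])
  then have "s \<in> incl c'"
    using z by (auto simp: incl_def r_coset_def sdpN_eq_image_nu)
  then have "incl c' = N #>\<^bsub>S\<^esub> s"
    using \<sigma>.S.repr_independence c' N.is_subgroup by (simp add: incl_def)
  then show ?thesis
    using c' by metis
qed

lemma kernel_u: "kernel (S Mod N) Fib u = incl ` carrier (G n)"
proof
  show "kernel (S Mod N) Fib u \<subseteq> incl ` carrier (G n)"
  proof
    fix X assume "X \<in> kernel (S Mod N) Fib u"
    then obtain s where s: "s \<in> carrier S" "X = N #>\<^bsub>S\<^esub> s" and "u X = \<one>\<^bsub>Fib\<^esub>"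
      by (auto simp: kernel_def FactGroup_def RCOSETS_def)
    then show "X \<in> incl ` carrier (G n)"
      using rcos_incl_of_phi_one u_rcos by force
  qed
  show "incl ` carrier (G n) \<subseteq> kernel (S Mod N) Fib u"
  proof
    fix X assume "X \<in> incl ` carrier (G n)"
    then obtain c where c: "c \<in> carrier (G n)" and X: "X = incl c" by blast
    have "u X = phi (\<one>\<^bsub>Q (n-1)\<^esub>, \<one>\<^bsub>H n\<^esub>, c)"
      using u_rcos c by (simp add: X incl_def)
    also have "\<dots> = \<one>\<^bsub>Fib\<^esub>"
      by (simp add: phi_def one_Fib)
    finally show "X \<in> kernel (S Mod N) Fib u"
      using incl_hom c X by (auto simp: kernel_def hom_def)
  qed
qed

lemma u_surj: "u ` carrier (S Mod N) = carrier Fib"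
proof
  show "u ` carrier (S Mod N) \<subseteq> carrier Fib"
    using u_hom by (auto simp: hom_def)
  show "carrier Fib \<subseteq> u ` carrier (S Mod N)"
  proof
    fix z assume "z \<in> carrier Fib"
    then obtain x y where z: "z = (x, y)" and xy: "(x, y) \<in> fibC Q xi H dH p (n-1)"
      by (cases z) (simp add: fibGrp_def)
    obtain a where a: "a \<in> carrier (Q (n-1))" "xi (n-1) a = x" "p (n-1) a = y"
      using p.fibC_lift[of "n-1" x y] xy n3 by fastforce
    have s: "(a, \<one>\<^bsub>H n\<^esub>, \<one>\<^bsub>G n\<^esub>) \<in> carrier S"
      using a by simp
    have "u (N #>\<^bsub>S\<^esub> (a, \<one>\<^bsub>H n\<^esub>, \<one>\<^bsub>G n\<^esub>)) = z"
      using u_rcos[OF s] a z by (auto simp: phi_def)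
    moreover have "N #>\<^bsub>S\<^esub> (a, \<one>\<^bsub>H n\<^esub>, \<one>\<^bsub>G n\<^esub>) \<in> carrier (S Mod N)"
      using s by (auto simp: FactGroup_def RCOSETS_def)
    ultimately show "z \<in> u ` carrier (S Mod N)" by force
  qed
qed

end

theorem mainTheorem3:
  fixes n :: nat
    and Q :: "nat \<Rightarrow> 'q monoid" and xi :: "nat \<Rightarrow> 'q \<Rightarrow> 'q" and actQ :: "nat \<Rightarrow> 'q \<Rightarrow> 'q \<Rightarrow> 'q"
    and H :: "nat \<Rightarrow> 'h monoid" and dH :: "nat \<Rightarrow> 'h \<Rightarrow> 'h" and actH :: "nat \<Rightarrow> 'h \<Rightarrow> 'h \<Rightarrow> 'h"
    and G :: "nat \<Rightarrow> 'g monoid" and dG :: "nat \<Rightarrow> 'g \<Rightarrow> 'g" and actG :: "nat \<Rightarrow> 'g \<Rightarrow> 'g \<Rightarrow> 'g"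
    and p :: "nat \<Rightarrow> 'q \<Rightarrow> 'h" and f :: "nat \<Rightarrow> 'q \<Rightarrow> 'g"
  assumes n3: "n \<ge> 3"
    and p_tf: "ncc_trivial_fibration n Q xi actQ H dH actH p"
    and f_mor: "ncc_morphism n Q xi actQ G dG actG f"
  defines "P \<equiv> pushP n Q xi H actH G actG p f"
    and "i \<equiv> (\<lambda>c. pclass n Q xi H actH G actG p f \<one>\<^bsub>Q (n-1)\<^esub> \<one>\<^bsub>H n\<^esub> c)"
  shows "(\<exists>u. u \<in> hom P (fibGrp Q xi H dH p (n-1))
            \<and> (\<forall>a\<in>carrier (Q (n-1)). \<forall>b\<in>carrier (H n). \<forall>c\<in>carrier (G n).
                 u (pclass n Q xi H actH G actG p f a b c)
                   = (xi (n-1) a, p (n-1) a \<otimes>\<^bsub>H (n-1)\<^esub> dH n b))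
            \<and> i \<in> hom (G n) P
            \<and> inj_on i (carrier (G n))
            \<and> kernel P (fibGrp Q xi H dH p (n-1)) u = i ` carrier (G n)
            \<and> u ` carrier P = carrier (fibGrp Q xi H dH p (n-1)))
       \<and> (\<forall>k. 1 \<le> k \<and> k \<le> n - 2 \<longrightarrow> u_map Q xi p k ` carrier (Q k) = fibC Q xi H dH p k)"
proof -
  interpret ncc_pushout n Q xi actQ H dH actH G dG actG p f
    using n3 p_tf f_mor
    by unfold_locales (auto simp: ncc_trivial_fibration_def ncc_fibration_def ncc_weak_equivalence_def)
  have pclass: "pclass n Q xi H actH G actG p f a b c = N #>\<^bsub>S\<^esub> (a, b, c)" for a b c
    by (simp add: pclass_def sdp_semidirect)
  have "P = S Mod N" "i = incl"
    by (simp_all add: P_def pushP_def sdp_semidirect i_def incl_def pclass fun_eq_iff)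
  moreover have "\<forall>k. 1 \<le> k \<and> k \<le> n - 2 \<longrightarrow> u_map Q xi p k ` carrier (Q k) = fibC Q xi H dH p k"
    by (intro allI impI p.u_map_surj) auto
  ultimately show ?thesis
    using u_hom u_rcos incl_hom incl_inj kernel_u u_surj
    by (intro conjI exI[of _ u]) (simp_all add: pclass phi_def)
qed

end
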